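(* Let $\ell\ge 1$, let $R$ be a path in $H_\ell$ and let $h\in\{1,\dots,\ell\}$. Then there are at most $2$ vertices $v_{h',j}$ with $|h'|=h$ that are turn vertices of $R$.
   Context: For an integer $\ell\ge 1$, $H_\ell$ is the graph with vertex set $V_\ell=\{v_{h,j} : h\in\{-\ell,\dots,\ell\},\ j\in\{1,\dots,2^{\ell-|h|}\}\}$ and with the following edges: (1) $v_{h,j}v_{h-1,2j-1}$ and $v_{h,j}v_{h-1,2j}$ for every $h\in\{1,\dots,\ell\}$ and $j\in\{1,\dots,2^{\ell-h}\}$; (2) $v_{h,j}v_{h+1,2j-1}$ and $v_{h,j}v_{h+1,2j}$ for every $h\in\{-\ell,\dots,-1\}$ and $j\in\{1,\dots,2^{\ell-|h|}\}$; (3) the edge $v_{\ell,1}v_{-\ell,1}$; (4) the edges $v_{0,2j-1}v_{0,2j}$ for every $j\in\{1,\dots,2^{\ell-1}\}$. For a path $R$ in $H_\ell$ and a vertex $v_{h,k}$ of $R$, let $\deg_R(v_{h,k})$ be its degree in $R$. The vertex $v_{h,k}$ is a turn vertex of $R$ if $h\neq 0$, $\deg_R(v_{h,k})=2$, and its two neighbours on $R$ are $v_{h',2k-1}$ and $v_{h',2k}$, where $h'=h-1$ if $h>0$ and $h'=h+1$ if $h<0$ (i.e., both path-neighbours are its two children in its tree). *)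

theory Defs
  imports Main
begin

text \<open>Vertex v_{h,j} of H_l is represented as the pair (h, j) :: int \<times> nat.\<close>

type_synonym hvert = "int \<times> nat"

definition H_vert :: "nat \<Rightarrow> hvert set" where
  "H_vert l = {(h, j). - int l \<le> h \<and> h \<le> int l \<and> 1 \<le> j \<and> j \<le> 2 ^ (l - nat \<bar>h\<bar>)}"

definition H_child :: "nat \<Rightarrow> hvert \<Rightarrow> hvert \<Rightarrow> bool" where
  "H_child l p c \<longleftrightarrow> p \<in> H_vert l \<and>
     ((1 \<le> fst p \<and> fst p \<le> int l \<and> fst c = fst p - 1) \<or>
      (- int l \<le> fst p \<and> fst p \<le> -1 \<and> fst c = fst p + 1)) \<and>
     (snd c = 2 * snd p - 1 \<or> snd c = 2 * snd p)"

definition H_adj :: "nat \<Rightarrow> hvert \<Rightarrow> hvert \<Rightarrow> bool" where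
  "H_adj l u v \<longleftrightarrow>
     H_child l u v \<or> H_child l v u \<or>
     {u, v} = {(int l, 1), (- int l, 1)} \<or>
     (\<exists>j. 1 \<le> j \<and> j \<le> 2 ^ (l - 1) \<and> {u, v} = {(0, 2 * j - 1), (0, 2 * j)})"

definition H_path :: "nat \<Rightarrow> hvert list \<Rightarrow> bool" where
  "H_path l R \<longleftrightarrow> R \<noteq> [] \<and> distinct R \<and> set R \<subseteq> H_vert l \<and>
     (\<forall>i. Suc i < length R \<longrightarrow> H_adj l (R ! i) (R ! Suc i))"

definition path_nbrs :: "'a list \<Rightarrow> 'a \<Rightarrow> 'a set" where
  "path_nbrs R v = {R ! Suc i | i. Suc i < length R \<and> R ! i = v}
                 \<union> {R ! i | i. Suc i < length R \<and> R ! Suc i = v}"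

definition path_deg :: "'a list \<Rightarrow> 'a \<Rightarrow> nat" where
  "path_deg R v = card (path_nbrs R v)"

definition turn_vertex :: "hvert list \<Rightarrow> hvert \<Rightarrow> bool" where
  "turn_vertex R v \<longleftrightarrow> v \<in> set R \<and> fst v \<noteq> 0 \<and> path_deg R v = 2 \<and>
     (let h' = (if fst v > 0 then fst v - 1 else fst v + 1) in
      path_nbrs R v = {(h', 2 * snd v - 1), (h', 2 * snd v)})"

end

theory Submission imports Defs begin

text \<open>Fix a level h. For each c the two subtrees rooted at v_{h,c+1} and v_{-h,c+1}, joined by
  the level-0 matching edges between their leaves, form a block; every other edge leaving the
  block starts at one of the two roots. A turn vertex at level h is a root whose two path
  neighbours lie in its block. If two turn vertices share a block, the path can never leave it,
  so they are the only turn vertices at level h. Otherwise the path enters or leaves the block of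
  a turn vertex at most once, through the other root, so the block contains an end of the path;
  distinct blocks then give an injection of the turn vertices into the two ends.\<close>

text \<open>A vertex x with |fst x| \<le> h lies below v_{h,c+1} or v_{-h,c+1} for c = block_of h x;
  for |fst x| > h the value is junk.\<close>
definition block_of :: "nat \<Rightarrow> hvert \<Rightarrow> nat" where
  "block_of h x = (snd x - 1) div 2 ^ (h - nat \<bar>fst x\<bar>)"

definition in_block :: "nat \<Rightarrow> nat \<Rightarrow> hvert \<Rightarrow> bool" where
  "in_block h c x \<longleftrightarrow> \<bar>fst x\<bar> \<le> int h \<and> block_of h x = c"

lemma in_block_unique: "in_block h c x \<Longrightarrow> in_block h c' x \<Longrightarrow> c = c'"
  by (simp add: in_block_def)

lemma child_index_pred_div2: "(q::nat) = 2 * p - 1 \<or> q = 2 * p \<Longrightarrow> (q - 1) div 2 = p - 1"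
  by auto

lemma in_block_H_child:
  assumes "H_child l p q" "in_block h c p"
  shows "in_block h c q"
proof -
  have lvl: "nat \<bar>fst q\<bar> + 1 = nat \<bar>fst p\<bar>" "\<bar>fst q\<bar> < \<bar>fst p\<bar>"
    using assms(1) by (auto simp: H_child_def)
  have p_le: "\<bar>fst p\<bar> \<le> int h" using assms(2) by (simp add: in_block_def)
  then have exp: "h - nat \<bar>fst q\<bar> = Suc (h - nat \<bar>fst p\<bar>)" using lvl(1) by linarith
  have half: "(snd q - 1) div 2 = snd p - 1"
    using assms(1) child_index_pred_div2 unfolding H_child_def by blast
  have "block_of h q = (snd q - 1) div 2 div 2 ^ (h - nat \<bar>fst p\<bar>)"
    unfolding block_of_def exp by (simp add: div_mult2_eq)
  also have "\<dots> = block_of h p" unfolding block_of_def half ..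
  finally show ?thesis using assms(2) lvl(2) p_le by (simp add: in_block_def)
qed

lemma odd_pred_div_two_power:
  assumes "1 \<le> h" "1 \<le> (j::nat)"
  shows "(2 * j - 1 - 1) div 2 ^ h = (2 * j - 1) div 2 ^ h"
proof -
  have "(2::nat) ^ h = 2 * 2 ^ (h - 1)" using assms(1) by (cases h) auto
  moreover have "(2 * j - 1 - 1) div 2 = (2 * j - 1) div 2" using assms(2) by (cases j) auto
  ultimately show ?thesis by (metis div_mult2_eq)
qed

lemma H_adj_sym: "H_adj l x y \<Longrightarrow> H_adj l y x"
  unfolding H_adj_def by (auto simp: insert_commute)

lemma H_adj_leaves_block_at_root:
  assumes "H_adj l x y" "1 \<le> h" "h \<le> l" "in_block h c x" "\<not> in_block h c y"
  shows "\<bar>fst x\<bar> = int h"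
proof (rule ccontr)
  assume "\<bar>fst x\<bar> \<noteq> int h"
  then have below: "\<bar>fst x\<bar> < int h" using assms(4) by (simp add: in_block_def)
  consider "H_child l x y" | "H_child l y x" | "{x, y} = {(int l, 1), (- int l, 1)}"
    | j where "1 \<le> j" "{x, y} = {(0, 2 * j - 1), (0, 2 * j)}"
    using assms(1) unfolding H_adj_def by blast
  then show False
  proof cases
    case 1
    then show False using in_block_H_child assms(4,5) by blast
  next
    case 2
    then have "in_block h (block_of h y) y" using below by (auto simp: H_child_def in_block_def)
    then show False using in_block_H_child[OF 2] assms(4,5) in_block_unique by metis
  next
    case 3
    then show False using below assms(3) by (auto simp: doubleton_eq_iff)
  next
    case 4
    then have "(x = (0, 2*j-1) \<and> y = (0, 2*j)) \<or> (x = (0, 2*j) \<and> y = (0, 2*j-1))"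
      by (auto simp: doubleton_eq_iff)
    then show False
      using odd_pred_div_two_power[OF assms(2) 4(1)] assms(4,5)
      unfolding in_block_def block_of_def by auto
  qed
qed

lemma in_block_root:
  assumes "x \<in> H_vert l" "in_block h c x" "\<bar>fst x\<bar> = int h"
  shows "x = (int h, c + 1) \<or> x = (- int h, c + 1)"
proof -
  have "snd x = c + 1" using assms unfolding in_block_def block_of_def H_vert_def by auto
  moreover have "fst x = int h \<or> fst x = - int h" using assms(3) by arith
  ultimately show ?thesis by (auto simp: prod_eq_iff)
qed

lemma in_block_root_cases:
  assumes "x \<in> H_vert l" "y \<in> H_vert l" "z \<in> H_vert l"
    "in_block h c x" "in_block h c y" "in_block h c z"
    "\<bar>fst x\<bar> = int h" "\<bar>fst y\<bar> = int h" "\<bar>fst z\<bar> = int h" "y \<noteq> z"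
  shows "x \<in> {y, z}"
proof -
  have "x \<in> {(int h, c + 1), (- int h, c + 1)}" "y \<in> {(int h, c + 1), (- int h, c + 1)}"
    "z \<in> {(int h, c + 1), (- int h, c + 1)}"
    using in_block_root assms by blast+
  then show ?thesis using assms(10) by auto
qed

lemma turn_vertex_nbrs_in_block:
  assumes "turn_vertex R t" "\<bar>fst t\<bar> = int h" "z \<in> path_nbrs R t"
  shows "in_block h (block_of h t) z"
proof -
  have "fst t \<noteq> 0" using assms(1) by (simp add: turn_vertex_def)
  moreover have z: "z \<in> {(if fst t > 0 then fst t - 1 else fst t + 1, 2 * snd t - 1),
                          (if fst t > 0 then fst t - 1 else fst t + 1, 2 * snd t)}"
    using assms(1,3) unfolding turn_vertex_def Let_def by auto
  ultimately have lvl: "\<bar>fst z\<bar> = int h - 1" "h - nat \<bar>fst z\<bar> = 1"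
    using assms(2) by auto
  have "(snd z - 1) div 2 = snd t - 1" using z child_index_pred_div2 by auto
  then show ?thesis using lvl assms(2) by (simp add: in_block_def block_of_def)
qed

lemma in_block_block_of: "\<bar>fst x\<bar> \<le> int h \<Longrightarrow> in_block h (block_of h x) x"
  by (simp add: in_block_def)

lemma path_nbrs_Suc: "Suc i < length R \<Longrightarrow> R ! Suc i \<in> path_nbrs R (R ! i)"
  and path_nbrs_pred: "Suc i < length R \<Longrightarrow> R ! i \<in> path_nbrs R (R ! Suc i)"
  unfolding path_nbrs_def by blast+

lemma H_path_exits_block_at_root:
  assumes "H_path l R" "1 \<le> h" "h \<le> l" "Suc i < length R"
    "in_block h c (R ! i)" "\<not> in_block h c (R ! Suc i)"
  shows "\<bar>fst (R ! i)\<bar> = int h"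
  using assms H_adj_leaves_block_at_root unfolding H_path_def by blast

lemma H_path_enters_block_at_root:
  assumes "H_path l R" "1 \<le> h" "h \<le> l" "Suc i < length R"
    "\<not> in_block h c (R ! i)" "in_block h c (R ! Suc i)"
  shows "\<bar>fst (R ! Suc i)\<bar> = int h"
  using assms H_adj_leaves_block_at_root H_adj_sym unfolding H_path_def by blast

lemma turn_vertex_not_on_block_boundary:
  assumes T: "turn_vertex R t" "\<bar>fst t\<bar> = int h" and i: "Suc i < length R"
    and "in_block h (block_of h t) (R ! i) \<noteq> in_block h (block_of h t) (R ! Suc i)"
  shows "R ! i \<noteq> t \<and> R ! Suc i \<noteq> t"
  using assms turn_vertex_nbrs_in_block[OF T] path_nbrs_Suc[OF i] path_nbrs_pred[OF i]
    in_block_block_of[of t h] by (metis order_refl)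

lemma ex_nat_fall_between:
  assumes "f p" "\<not> f q" "p < (q::nat)"
  shows "\<exists>i. p \<le> i \<and> i < q \<and> f i \<and> \<not> f (Suc i)"
proof -
  obtain k where "k < q - p" "f (p + k)" "\<not> f (p + Suc k)"
    using ex_least_nat_less[of "\<lambda>i. \<not> f (p + i)" "q - p"] assms by auto
  then show ?thesis by (intro exI[of _ "p + k"]) auto
qed

text \<open>The path enters the block before t and leaves it after t, both times through the root
  other than t, at two different positions: impossible for a path without repeated vertices.\<close>
lemma turn_vertex_block_contains_end:
  assumes P: "H_path l R" and h: "1 \<le> h" "h \<le> l"
    and T: "turn_vertex R t" "\<bar>fst t\<bar> = int h"
  shows "in_block h (block_of h t) (R ! 0) \<or> in_block h (block_of h t) (R ! (length R - 1))"
proof (rule ccontr)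
  assume ends: "\<not> ?thesis"
  define f where "f k = in_block h (block_of h t) (R ! k)" for k
  have sub: "set R \<subseteq> H_vert l" using P by (simp add: H_path_def)
  obtain p where p: "p < length R" "R ! p = t"
    using T(1) by (metis turn_vertex_def in_set_conv_nth)
  have own: "in_block h (block_of h t) t" using T(2) by (simp add: in_block_block_of)
  have fp: "f p" using own p(2) by (simp add: f_def)
  have "p \<noteq> length R - 1" using fp ends by (auto simp: f_def)
  then have "p < length R - 1" using p(1) by linarith
  obtain i1 where i1: "i1 < p" "\<not> f i1" "f (Suc i1)"
    using ex_least_nat_less[of f p] fp ends by (auto simp: f_def)
  obtain i2 where i2: "p \<le> i2" "i2 < length R - 1" "f i2" "\<not> f (Suc i2)"
    using ex_nat_fall_between[of f p "length R - 1"] fp ends \<open>p < length R - 1\<close>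
    by (auto simp: f_def)
  have entry_ne: "R ! Suc i1 \<noteq> t" and exit_ne: "R ! i2 \<noteq> t"
    using turn_vertex_not_on_block_boundary[OF T, of i1] i1 p(1)
      turn_vertex_not_on_block_boundary[OF T, of i2] i2(2-4)
    unfolding f_def by auto
  have "Suc i1 < length R" "i2 < length R" using i1(1) i2(2) p(1) by linarith+
  then have "R ! Suc i1 \<in> H_vert l" "R ! i2 \<in> H_vert l" "t \<in> H_vert l"
    using sub p nth_mem by blast+
  moreover have "\<bar>fst (R ! Suc i1)\<bar> = int h" "\<bar>fst (R ! i2)\<bar> = int h"
    using H_path_enters_block_at_root[OF P h] H_path_exits_block_at_root[OF P h] i1 i2 p(1)
    unfolding f_def by auto
  ultimately have "R ! Suc i1 = R ! i2"
    using in_block_root_cases[of "R ! Suc i1" l "R ! i2" t h "block_of h t"]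
      i1(3) i2(3) entry_ne exit_ne own T(2)
    unfolding f_def by blast
  then have "Suc i1 = i2"
    using P i1(1) i2(2) p(1) by (simp add: H_path_def nth_eq_iff_index_eq)
  moreover have "Suc i1 \<noteq> p" using entry_ne p(2) by auto
  ultimately show False using i1(1) i2(1) by linarith
qed

lemma H_path_in_closed_block:
  assumes P: "H_path l R" and h: "1 \<le> h" "h \<le> l"
    and closed: "\<And>x z. x \<in> set R \<Longrightarrow> in_block h c x \<Longrightarrow> \<bar>fst x\<bar> = int h \<Longrightarrow>
      z \<in> path_nbrs R x \<Longrightarrow> in_block h c z"
    and "x \<in> set R" "in_block h c x" "y \<in> set R"
  shows "in_block h c y"
proof -
  define f where "f k = in_block h c (R ! k)" for k
  have step: "f i = f (Suc i)" if i: "Suc i < length R" for i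
  proof (rule ccontr)
    assume "f i \<noteq> f (Suc i)"
    then consider "f i" "\<not> f (Suc i)" | "\<not> f i" "f (Suc i)" by blast
    then show False
    proof cases
      case 1
      then show False
        using closed[of "R ! i"] H_path_exits_block_at_root[OF P h i] path_nbrs_Suc[OF i] i
        unfolding f_def by simp
    next
      case 2
      then show False
        using closed[of "R ! Suc i"] H_path_enters_block_at_root[OF P h i] path_nbrs_pred[OF i] i
        unfolding f_def by simp
    qed
  qed
  have const: "f k = f 0" if "k < length R" for k
    using that by (induction k) (auto simp: step)
  show ?thesis
    using const assms(5-7) unfolding f_def by (metis in_set_conv_nth)
qed

lemma H_path_in_block_of_two_turns:
  assumes P: "H_path l R" and h: "1 \<le> h" "h \<le> l"
    and T1: "turn_vertex R t1" "\<bar>fst t1\<bar> = int h"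
    and T2: "turn_vertex R t2" "\<bar>fst t2\<bar> = int h"
    and ne: "t1 \<noteq> t2" and same: "block_of h t1 = block_of h t2"
    and "x \<in> set R"
  shows "in_block h (block_of h t1) x"
proof -
  define c where "c = block_of h t1"
  have sub: "set R \<subseteq> H_vert l" using P by (simp add: H_path_def)
  have own: "in_block h c t1" "in_block h c t2"
    using T1(2) T2(2) same by (simp_all add: c_def in_block_def)
  have roots: "y = t1 \<or> y = t2" if "y \<in> set R" "in_block h c y" "\<bar>fst y\<bar> = int h" for y
  proof -
    have "y \<in> H_vert l" "t1 \<in> H_vert l" "t2 \<in> H_vert l"
      using that(1) T1(1) T2(1) sub by (auto simp: turn_vertex_def)
    then show ?thesis
      using in_block_root_cases that(2,3) ne T1(2) T2(2) own by fastforce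
  qed
  have "in_block h c z"
    if "y \<in> set R" "in_block h c y" "\<bar>fst y\<bar> = int h" "z \<in> path_nbrs R y" for y z
    using roots[OF that(1-3)] that(4) turn_vertex_nbrs_in_block[OF T1] turn_vertex_nbrs_in_block[OF T2]
      same unfolding c_def by metis
  moreover have "t1 \<in> set R" using T1(1) by (simp add: turn_vertex_def)
  ultimately show ?thesis
    using H_path_in_closed_block[OF P h] own(1) assms(10) unfolding c_def by blast
qed

lemma turn_vertex_in_shared_block:
  assumes "H_path l R" "1 \<le> h" "h \<le> l"
    and T1: "turn_vertex R t1" "\<bar>fst t1\<bar> = int h"
    and T2: "turn_vertex R t2" "\<bar>fst t2\<bar> = int h"
    and ne: "t1 \<noteq> t2" and same: "block_of h t1 = block_of h t2"
    and T: "turn_vertex R t" "\<bar>fst t\<bar> = int h"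
  shows "t \<in> {t1, t2}"
proof -
  have "t \<in> set R" "t1 \<in> set R" "t2 \<in> set R" using T T1 T2 by (simp_all add: turn_vertex_def)
  moreover have "set R \<subseteq> H_vert l" using assms(1) by (simp add: H_path_def)
  moreover have "in_block h (block_of h t1) x" if "x \<in> set R" for x
    using H_path_in_block_of_two_turns assms that by blast
  ultimately show ?thesis
    using in_block_root_cases[of t l t1 t2 h "block_of h t1"] T(2) T1(2) T2(2) ne by blast
qed

lemma card_le_2_if_subset_doubleton: "A \<subseteq> {a, b} \<Longrightarrow> card A \<le> 2"
  using card_mono[of "{a, b}" A] by (simp add: card_insert_if split: if_splits)

theorem lemma3:
  fixes l h :: nat and R :: "hvert list"
  assumes "1 \<le> l" and "H_path l R" and "1 \<le> h" and "h \<le> l"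
  shows "card {v. \<bar>fst v\<bar> = int h \<and> turn_vertex R v} \<le> 2"
proof -
  define T where "T = {v. \<bar>fst v\<bar> = int h \<and> turn_vertex R v}"
  show ?thesis
  proof (cases "inj_on (block_of h) T")
    case True
    have "block_of h t \<in> {block_of h (R ! 0), block_of h (R ! (length R - 1))}" if "t \<in> T" for t
      using turn_vertex_block_contains_end[OF assms(2-4), of t] that
      by (auto simp: T_def in_block_def)
    then have "block_of h ` T \<subseteq> {block_of h (R ! 0), block_of h (R ! (length R - 1))}"
      by blast
    then show ?thesis
      using card_le_2_if_subset_doubleton card_image[OF True] by (fastforce simp: T_def)
  next
    case False
    then obtain t1 t2 where "t1 \<in> T" "t2 \<in> T" "t1 \<noteq> t2" "block_of h t1 = block_of h t2"
      by (auto simp: inj_on_def)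
    then have "T \<subseteq> {t1, t2}"
      using turn_vertex_in_shared_block[OF assms(2-4)] unfolding T_def by blast
    then show ?thesis by (simp add: card_le_2_if_subset_doubleton T_def)
  qed
qed

end
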